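(* Let $\lambda_1,\dots,\lambda_n$ be ordinals with $\operatorname{cf}(\lambda_i)\neq\omega$, put $X=\prod_{i=1}^n\lambda_i$, and let $W$ be an open set containing the identity in the colimit space topology on $\operatorname{colim}_{K\in\mathscr K(X)}\operatorname{Homeo}_K(X)$. Then there are $m_1,\dots,m_n\in\mathbb N$ and $\alpha^{(1)}\in X$ such that for every $\alpha=(\alpha_1,\dots,\alpha_n)\in X$ with $\alpha\geq\alpha^{(1)}$ there are sets $F_i^\alpha\subseteq\alpha_i$ with $|F_i^\alpha|=m_i$ and $$U\big(\mathcal G^{\downarrow\alpha}_{\{F_i^\alpha\}_{i=1}^n}\big)\subseteq W\cap\operatorname{Homeo}_{\downarrow\alpha}(X).$$
   Context: Ordinals carry the order topology and $X$ the product topology; $X$ is ordered by the componentwise (product) order, and $\downarrow\alpha=\{\beta\in X\mid\beta\leq\alpha\}=\prod_i[0,\alpha_i]$, a compact open subset. For compact $K\subseteq X$, $\operatorname{Homeo}_K(X)$ is the group of homeomorphisms of $X$ fixing every point outside $K$, with the compact-open topology; $\mathscr K(X)$ is the set of compact subsets ordered by inclusion, and $\operatorname{colim}_K\operatorname{Homeo}_K(X)$ is the union $\bigcup_K\operatorname{Homeo}_K(X)$ with the colimit space topology $\{U\mid U\cap\operatorname{Homeo}_K(X)\text{ open in }\operatorname{Homeo}_K(X)\ \forall K\}$. Grid partitions: for an ordinal $\mu$ and finite $F=\{x_1<\cdots<x_N\}\subseteq\mu$, $\mathcal G^\mu_F=\{[0,x_1]\}\cup\{[x_j+1,x_{j+1}]\mid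 1\leq j<N\}\cup\{[x_N+1,\cdot)\}$ (with $[\alpha,\beta]=\{x\in\mu\mid\alpha\le x\le\beta\}$, $[\alpha,\cdot)=\{x\in\mu\mid x\ge\alpha\}$; $\{\mu\}$ if $F=\emptyset$); for $\downarrow\alpha=\prod_i(\alpha_i+1)$ and finite $F_i\subseteq\alpha_i$, $\mathcal G^{\downarrow\alpha}_{\{F_i\}}=\{\prod_iU_i\mid U_i\in\mathcal G^{\alpha_i+1}_{F_i}\}$. For a finite clopen partition $\mathcal A$ of $\downarrow\alpha$, $U(\mathcal A)$ is the subgroup of those $h\in\operatorname{Homeo}_{\downarrow\alpha}(X)$ with $h(A)=A$ for every $A\in\mathcal A$. *)

theory Defs
  imports "HOL-Analysis.Analysis"
begin

text \<open>Ordinals are modelled inside an arbitrary well-ordered type 'a: the ordinal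
  lambda is the initial segment {..<L} for some L :: 'a.\<close>

definition cofinality_omega :: "'a::wellorder \<Rightarrow> bool" where
  "cofinality_omega L \<longleftrightarrow>
     (\<exists>f :: nat \<Rightarrow> 'a. strict_mono f \<and> (\<forall>k. f k < L) \<and> (\<forall>y. y < L \<longrightarrow> (\<exists>k. y \<le> f k)))"

definition order_top_on :: "'a::linorder set \<Rightarrow> 'a topology" where
  "order_top_on \<mu> = topology_generated_by
     ({\<mu>} \<union> {{x \<in> \<mu>. x < a} | a. a \<in> \<mu>} \<union> {{x \<in> \<mu>. a < x} | a. a \<in> \<mu>})"

definition ord_prod :: "nat \<Rightarrow> (nat \<Rightarrow> 'a::wellorder) \<Rightarrow> (nat \<Rightarrow> 'a) topology" where
  "ord_prod n L = product_topology (\<lambda>i. order_top_on {..<L i}) {..<n}"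

text \<open>Homeo_K(X): homeomorphisms of X fixing every point outside K (maps are taken to be
  the identity outside K, also outside the carrier, so each homeomorphism has a unique
  representative).\<close>
definition Homeo_K :: "'b topology \<Rightarrow> 'b set \<Rightarrow> ('b \<Rightarrow> 'b) set" where
  "Homeo_K X K = {h. homeomorphic_map X X h \<and> (\<forall>x. x \<notin> K \<longrightarrow> h x = x)}"

definition compact_open_top :: "'b topology \<Rightarrow> ('b \<Rightarrow> 'b) set \<Rightarrow> ('b \<Rightarrow> 'b) topology" where
  "compact_open_top X H = topology_generated_by
     ({H} \<union> {{h \<in> H. h ` C \<subseteq> U} | C U. compactin X C \<and> openin X U})"

definition colim_open :: "'b topology \<Rightarrow> ('b \<Rightarrow> 'b) set \<Rightarrow> bool" where
  "colim_open X W \<longleftrightarrow>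
     W \<subseteq> (\<Union>K \<in> {K. compactin X K}. Homeo_K X K) \<and>
     (\<forall>K. compactin X K \<longrightarrow> openin (compact_open_top X (Homeo_K X K)) (W \<inter> Homeo_K X K))"

definition down :: "nat \<Rightarrow> (nat \<Rightarrow> 'a::wellorder) \<Rightarrow> (nat \<Rightarrow> 'a) set" where
  "down n \<alpha> = PiE {..<n} (\<lambda>i. {..\<alpha> i})"

text \<open>Grid partition G^mu_F for finite F = {x_1 < ... < x_N} in mu:
  [0,x_1], [x_j+1, x_{j+1}] = (x_j, x_{j+1}], [x_N+1, .) = (x_N, .).\<close>
definition grid1 :: "'a::wellorder set \<Rightarrow> 'a set \<Rightarrow> 'a set set" where
  "grid1 \<mu> F = (if F = {} then {\<mu>} else
      {{y \<in> \<mu>. y \<le> Min F}}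
    \<union> {{y \<in> \<mu>. x < y \<and> y \<le> x'} | x x'. x \<in> F \<and> x' \<in> F \<and> x < x' \<and> \<not> (\<exists>z \<in> F. x < z \<and> z < x')}
    \<union> {{y \<in> \<mu>. Max F < y}})"

definition grid :: "nat \<Rightarrow> (nat \<Rightarrow> 'a::wellorder) \<Rightarrow> (nat \<Rightarrow> 'a set) \<Rightarrow> (nat \<Rightarrow> 'a) set set" where
  "grid n \<alpha> F = {PiE {..<n} U | U. \<forall>i < n. U i \<in> grid1 {..\<alpha> i} (F i)}"

definition U_part :: "nat \<Rightarrow> (nat \<Rightarrow> 'a::wellorder) \<Rightarrow> (nat \<Rightarrow> 'a) \<Rightarrow> (nat \<Rightarrow> 'a) set set
    \<Rightarrow> ((nat \<Rightarrow> 'a) \<Rightarrow> (nat \<Rightarrow> 'a)) set" where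
  "U_part n L \<alpha> \<A> = {h \<in> Homeo_K (ord_prod n L) (down n \<alpha>). \<forall>A \<in> \<A>. h ` A = A}"

end

theory Submission
  imports Defs
begin

text \<open>Fix \<alpha>. A subbasic neighbourhood {h. h ` C \<subseteq> U} of the identity in Homeo(down \<alpha>)
  contains U(G) for a grid G: cover the compact set C \<inter> down \<alpha> by finitely many boxes inside U
  and cut at all their corners; intersections are handled by merging cut sets. So W contains
  such a group at every \<alpha>, with at most B cuts per coordinate for some B, and this persists to
  smaller \<alpha>. As no \<lambda> i has countable cofinality, every sequence in X is bounded, so a single B
  works for all \<alpha>. Finally, above a suitable \<alpha>1 any set of at most B cuts below \<alpha> i can be
  padded to a fixed size m i, and adding cuts only shrinks U(G).\<close>

section \<open>Ordinals and their products\<close>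

lemma topspace_order_top_on [simp]: "topspace (order_top_on \<mu>) = \<mu>"
  unfolding order_top_on_def topology_generated_by_topspace by auto

lemma openin_order_top_on_less: "a \<in> \<mu> \<Longrightarrow> openin (order_top_on \<mu>) {x \<in> \<mu>. x < a}"
  unfolding order_top_on_def by (rule topology_generated_by_Basis) blast

lemma openin_order_top_on_greater: "a \<in> \<mu> \<Longrightarrow> openin (order_top_on \<mu>) {x \<in> \<mu>. a < x}"
  unfolding order_top_on_def by (rule topology_generated_by_Basis) blast

lemma openin_order_top_on_atMost:
  fixes x :: "'a::wellorder"
  assumes "x < L"
  shows "openin (order_top_on {..<L}) {..x}"
proof (cases "\<exists>z. x < z \<and> z < L")
  case True
  define z where "z = (LEAST z. x < z \<and> z < L)"
  have z: "x < z" "z < L" using LeastI_ex[OF True] unfolding z_def by auto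
  have "{..x} = {y \<in> {..<L}. y < z}"
    using z not_less_Least[of _ "\<lambda>z. x < z \<and> z < L"] unfolding z_def[symmetric]
    by (auto simp: not_less) (meson not_less order.strict_trans z_def)
  then show ?thesis using openin_order_top_on_less[of z "{..<L}"] z by simp
next
  case False
  have "{..x} = {..<L}"
  proof (intro set_eqI iffI)
    show "y \<in> {..<L}" if "y \<in> {..x}" for y using that assms by simp
    show "y \<in> {..x}" if "y \<in> {..<L}" for y using that False by (simp add: not_less[symmetric]) blast
  qed
  then have "{..x} = topspace (order_top_on {..<L})" by simp
  then show ?thesis by (metis openin_topspace)
qed

lemma closedin_order_top_on_atMost:
  fixes x :: "'a::wellorder"
  assumes "x < L"
  shows "closedin (order_top_on {..<L}) {..x}"
proof -
  have "topspace (order_top_on {..<L}) - {..x} = {y \<in> {..<L}. x < y}" by auto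
  moreover have "{..x} \<subseteq> topspace (order_top_on {..<L})"
    using assms by (auto dest: le_less_trans)
  ultimately show ?thesis
    using assms openin_order_top_on_greater[of x "{..<L}"] unfolding closedin_def by simp
qed

text \<open>The interval (max A, x], with A = {} giving [0, x]; a finite A makes these sets
  closed under finite intersections.\<close>

definition left_seg :: "'a::linorder \<Rightarrow> 'a set \<Rightarrow> 'a set" where
  "left_seg x A = {y. y \<le> x \<and> (\<forall>a\<in>A. a < y)}"

lemma left_seg_Un: "left_seg x (A \<union> B) = left_seg x A \<inter> left_seg x B"
  unfolding left_seg_def by auto

lemma openin_left_seg:
  fixes x :: "'a::wellorder"
  assumes "x < L" "finite A"
  shows "openin (order_top_on {..<L}) (left_seg x A)"
  using assms(2)
proof (induction A)
  case empty
  then show ?case using openin_order_top_on_atMost[OF assms(1)] by (simp add: left_seg_def atMost_def)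
next
  case (insert a A)
  have "left_seg x (insert a A) = left_seg x A \<inter> {y \<in> {..<L}. a < y}"
    using assms(1) unfolding left_seg_def by (auto dest: le_less_trans)
  moreover have "openin (order_top_on {..<L}) {y \<in> {..<L}. a < y}"
  proof (cases "a < L")
    case False
    then have "{y \<in> {..<L}. a < y} = {}" by auto
    then show ?thesis by (metis openin_empty)
  qed (rule openin_order_top_on_greater, simp)
  ultimately show ?case using insert.IH by auto
qed

lemma order_top_on_nhds_left_seg:
  fixes x :: "'a::wellorder"
  assumes "openin (order_top_on {..<L}) V" "x \<in> V"
  shows "\<exists>A. finite A \<and> (\<forall>a\<in>A. a < x) \<and> left_seg x A \<subseteq> V"
proof -
  define nhd where "nhd (V :: 'a set) x \<longleftrightarrow> (\<exists>A. finite A \<and> (\<forall>a\<in>A. a < x) \<and> left_seg x A \<subseteq> V)"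
    for V x
  have "generate_topology_on
      ({{..<L}} \<union> {{x \<in> {..<L}. x < a} | a. a \<in> {..<L}} \<union> {{x \<in> {..<L}. a < x} | a. a \<in> {..<L}}) V"
    using assms(1) unfolding order_top_on_def by (rule openin_topology_generated_by)
  then have "\<forall>x\<in>V. nhd V x"
  proof (induction rule: generate_topology_on.induct)
    case (Int U V)
    have "nhd (U \<inter> V) x" if "nhd U x" "nhd V x" for x
      using that unfolding nhd_def
      by (metis (no_types, lifting) Int_mono Un_iff finite_UnI left_seg_Un)
    then show ?case using Int.IH by blast
  next
    case (UN K)
    have "nhd (\<Union>K) x" if "nhd V x" "V \<in> K" for V x
      using that unfolding nhd_def by blast
    then show ?case using UN.IH by blast
  next
    case (Basis S)
    have "nhd S x" if "x \<in> S" for x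
    proof -
      from Basis consider "S = {..<L}" | c where "S = {y \<in> {..<L}. y < c}"
        | c where "S = {y \<in> {..<L}. c < y}"
        unfolding Un_iff mem_Collect_eq singleton_iff by metis
      then show ?thesis
      proof cases
        case 1
        then have "left_seg x {} \<subseteq> S"
          using \<open>x \<in> S\<close> unfolding left_seg_def by (auto intro: le_less_trans)
        then show ?thesis unfolding nhd_def by blast
      next
        case (2 c)
        then have "left_seg x {} \<subseteq> S"
          using \<open>x \<in> S\<close> unfolding left_seg_def by (auto intro: le_less_trans)
        then show ?thesis unfolding nhd_def by blast
      next
        case (3 c)
        then have "left_seg x {c} \<subseteq> S" "c < x"
          using \<open>x \<in> S\<close> unfolding left_seg_def by (auto intro: le_less_trans)
        then show ?thesis unfolding nhd_def by blast
      qed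
    qed
    then show ?case by blast
  qed simp
  then show ?thesis using assms(2) unfolding nhd_def by blast
qed

lemma compactin_order_top_on_atMost:
  fixes a :: "'a::wellorder"
  assumes "a < L"
  shows "compactin (order_top_on {..<L}) {..a}"
  unfolding compactin_def
proof (intro conjI allI impI)
  show "{..a} \<subseteq> topspace (order_top_on {..<L})"
    using assms by (auto dest: le_less_trans)
  fix \<U> assume \<U>: "(\<forall>U\<in>\<U>. openin (order_top_on {..<L}) U) \<and> {..a} \<subseteq> \<Union>\<U>"
  have "x \<le> a \<longrightarrow> (\<exists>\<F>. finite \<F> \<and> \<F> \<subseteq> \<U> \<and> {..x} \<subseteq> \<Union>\<F>)" for x
  proof (induction x rule: less_induct)
    case (less x)
    show ?case
    proof
      assume "x \<le> a"
      then obtain V where V: "V \<in> \<U>" "x \<in> V" using \<U> by auto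
      then obtain A where A: "finite A" "\<forall>b\<in>A. b < x" "left_seg x A \<subseteq> V"
        using order_top_on_nhds_left_seg[of L V x] \<U> by blast
      show "\<exists>\<F>. finite \<F> \<and> \<F> \<subseteq> \<U> \<and> {..x} \<subseteq> \<Union>\<F>"
      proof (cases "A = {}")
        case True
        then have "{..x} \<subseteq> V" using A(3) by (simp add: left_seg_def atMost_def)
        then show ?thesis using V by (intro exI[of _ "{V}"]) auto
      next
        case False
        then have "Max A < x" "Max A \<le> a" using A \<open>x \<le> a\<close> by auto
        then obtain \<F> where \<F>: "finite \<F>" "\<F> \<subseteq> \<U>" "{..Max A} \<subseteq> \<Union>\<F>"
          using less.IH[of "Max A"] by blast
        have "{..x} \<subseteq> {..Max A} \<union> left_seg x A"
          using Max_ge[OF A(1)] unfolding left_seg_def by (auto simp: not_le) (meson le_less_trans)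
        then show ?thesis using \<F> A V by (intro exI[of _ "insert V \<F>"]) auto
      qed
    qed
  qed
  then show "\<exists>\<F>. finite \<F> \<and> \<F> \<subseteq> \<U> \<and> {..a} \<subseteq> \<Union>\<F>" by blast
qed

lemma topspace_ord_prod: "topspace (ord_prod n L) = PiE {..<n} (\<lambda>i. {..<L i})"
  unfolding ord_prod_def by simp

lemma compactin_down:
  assumes "\<alpha> \<in> topspace (ord_prod n L)"
  shows "compactin (ord_prod n L) (down n \<alpha>)"
  using assms compactin_order_top_on_atMost
  unfolding ord_prod_def down_def compactin_PiE by (auto simp: PiE_iff)

lemma closedin_down:
  assumes "\<alpha> \<in> topspace (ord_prod n L)"
  shows "closedin (ord_prod n L) (down n \<alpha>)"
  using assms closedin_order_top_on_atMost
  unfolding ord_prod_def down_def closedin_product_topology by (auto simp: PiE_iff)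

definition seg_box :: "nat \<Rightarrow> (nat \<Rightarrow> 'a::linorder) \<Rightarrow> (nat \<Rightarrow> 'a set) \<Rightarrow> (nat \<Rightarrow> 'a) set" where
  "seg_box n x A = PiE {..<n} (\<lambda>i. left_seg (x i) (A i))"

lemma mem_seg_box_self: "x \<in> extensional {..<n} \<Longrightarrow> \<forall>i<n. \<forall>a\<in>A i. a < x i \<Longrightarrow> x \<in> seg_box n x A"
  unfolding seg_box_def left_seg_def by (simp add: PiE_iff)

lemma openin_seg_box:
  assumes "x \<in> topspace (ord_prod n L)" "\<forall>i<n. finite (A i)"
  shows "openin (ord_prod n L) (seg_box n x A)"
proof -
  have "\<forall>i\<in>{..<n}. openin (order_top_on {..<L i}) (left_seg (x i) (A i))"
    using assms by (auto simp: topspace_ord_prod PiE_iff intro!: openin_left_seg)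
  then show ?thesis by (simp add: seg_box_def ord_prod_def openin_PiE_gen)
qed

lemma ord_prod_nhds_seg_box:
  assumes "openin (ord_prod n L) U" "x \<in> U"
  shows "\<exists>A. (\<forall>i<n. finite (A i) \<and> (\<forall>a\<in>A i. a < x i)) \<and> seg_box n x A \<subseteq> U"
proof -
  have "\<exists>V. finite {i \<in> {..<n}. V i \<noteq> topspace (order_top_on {..<L i})} \<and>
          (\<forall>i\<in>{..<n}. openin (order_top_on {..<L i}) (V i)) \<and> x \<in> PiE {..<n} V \<and> PiE {..<n} V \<subseteq> U"
    using assms unfolding ord_prod_def openin_product_topology_alt by (rule bspec)
  then obtain V where V: "\<forall>i\<in>{..<n}. openin (order_top_on {..<L i}) (V i)" "x \<in> PiE {..<n} V"
    "PiE {..<n} V \<subseteq> U"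
    by (elim exE conjE)
  have "\<exists>B. finite B \<and> (\<forall>a\<in>B. a < x i) \<and> left_seg (x i) B \<subseteq> V i" if "i < n" for i
    using order_top_on_nhds_left_seg[of "L i" "V i" "x i"] V(1) PiE_mem[OF V(2)] that by simp
  then have "\<forall>i. \<exists>B. i < n \<longrightarrow> finite B \<and> (\<forall>a\<in>B. a < x i) \<and> left_seg (x i) B \<subseteq> V i"
    by blast
  then have "\<exists>A. \<forall>i. i < n \<longrightarrow> finite (A i) \<and> (\<forall>a\<in>A i. a < x i) \<and> left_seg (x i) (A i) \<subseteq> V i"
    by (rule choice)
  then obtain A where A: "\<forall>i. i < n \<longrightarrow> finite (A i) \<and> (\<forall>a\<in>A i. a < x i) \<and> left_seg (x i) (A i) \<subseteq> V i"
    by (elim exE)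
  then have "PiE {..<n} (\<lambda>i. left_seg (x i) (A i)) \<subseteq> PiE {..<n} V"
    by (intro PiE_mono) simp
  then show ?thesis using A V(3) unfolding seg_box_def by (intro exI[of _ A]) simp
qed

section \<open>Grid partitions\<close>

definition grid1_cell :: "'a::linorder set \<Rightarrow> 'a set \<Rightarrow> 'a \<Rightarrow> 'a set" where
  "grid1_cell \<mu> F c = {y \<in> \<mu>. \<forall>f\<in>F. f < c \<longleftrightarrow> f < y}"

lemma grid1E:
  fixes F :: "'a::wellorder set"
  assumes "P \<in> grid1 \<mu> F" "finite F"
  obtains "P = {y \<in> \<mu>. \<forall>f\<in>F. \<not> f < y}"
  | "P = {y \<in> \<mu>. \<forall>f\<in>F. f < y}"
  | x x' where "P = {y \<in> \<mu>. x < y \<and> y \<le> x'}" "x \<in> F" "x' \<in> F" "x < x'"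
      "\<forall>z\<in>F. \<not> (x < z \<and> z < x')"
proof (cases "F = {}")
  case True
  then show ?thesis using assms(1) that(1) unfolding grid1_def by simp
next
  case False
  have "{y \<in> \<mu>. y \<le> Min F} = {y \<in> \<mu>. \<forall>f\<in>F. \<not> f < y}"
    using Min_ge_iff[OF assms(2) False] by (simp add: not_less)
  moreover have "{y \<in> \<mu>. Max F < y} = {y \<in> \<mu>. \<forall>f\<in>F. f < y}"
    using Max_less_iff[OF assms(2) False] by simp
  moreover have "P \<in> {{y \<in> \<mu>. y \<le> Min F}}
    \<union> {{y \<in> \<mu>. x < y \<and> y \<le> x'} | x x'. x \<in> F \<and> x' \<in> F \<and> x < x' \<and> \<not> (\<exists>z \<in> F. x < z \<and> z < x')}
    \<union> {{y \<in> \<mu>. Max F < y}}"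
    using assms(1) False unfolding grid1_def by simp
  ultimately show ?thesis
  proof (elim UnE)
    assume "P \<in> {{y \<in> \<mu>. x < y \<and> y \<le> x'} | x x'. x \<in> F \<and> x' \<in> F \<and> x < x'
      \<and> \<not> (\<exists>z \<in> F. x < z \<and> z < x')}"
    then show ?thesis using that(3) by blast
  qed (use that(1,2) in simp_all)
qed

lemma grid1_eq_cell:
  fixes F :: "'a::wellorder set"
  assumes "finite F" "P \<in> grid1 \<mu> F" "c \<in> P"
  shows "P = grid1_cell \<mu> F c"
  using assms(2,1)
proof (cases rule: grid1E)
  case 1
  then show ?thesis using assms(3) unfolding grid1_cell_def by blast
next
  case 2
  then show ?thesis using assms(3) unfolding grid1_cell_def by blast
next
  case (3 x x')
  have below_iff: "f < y \<longleftrightarrow> f \<le> x" if "y \<in> P" "f \<in> F" for y f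
    using 3 that by (metis (no_types, lifting) mem_Collect_eq not_le order.strict_trans1 order.strict_trans2)
  have "y \<in> P \<longleftrightarrow> y \<in> grid1_cell \<mu> F c" for y
  proof
    assume "y \<in> P"
    then show "y \<in> grid1_cell \<mu> F c"
      using 3(1) below_iff[of y] below_iff[OF assms(3)] unfolding grid1_cell_def by simp
  next
    assume y: "y \<in> grid1_cell \<mu> F c"
    then have "\<forall>f\<in>F. f < y \<longleftrightarrow> f \<le> x" 
      using below_iff[OF assms(3)] unfolding grid1_cell_def by simp
    then have "x < y" "y \<le> x'" using 3(2-4) by (simp_all add: not_less[symmetric])
    then show "y \<in> P" using y 3(1) unfolding grid1_cell_def by simp
  qed
  then show ?thesis by blast
qed

lemma grid1_covers:
  fixes F :: "'a::wellorder set"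
  assumes "finite F" "c \<in> \<mu>"
  shows "\<exists>P\<in>grid1 \<mu> F. c \<in> P"
proof -
  consider "F = {}" | "F \<noteq> {}" "c \<le> Min F" | "F \<noteq> {}" "Max F < c"
    | "F \<noteq> {}" "Min F < c" "c \<le> Max F"
    by (meson not_le)
  then show ?thesis
  proof cases
    case 1
    then show ?thesis using assms(2) unfolding grid1_def by simp
  next
    case 2
    then have "{y \<in> \<mu>. y \<le> Min F} \<in> grid1 \<mu> F" unfolding grid1_def by simp
    moreover have "c \<in> {y \<in> \<mu>. y \<le> Min F}" using 2(2) assms(2) by simp
    ultimately show ?thesis by (rule bexI[rotated])
  next
    case 3
    then have "{y \<in> \<mu>. Max F < y} \<in> grid1 \<mu> F" unfolding grid1_def by simp
    moreover have "c \<in> {y \<in> \<mu>. Max F < y}" using 3(2) assms(2) by simp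
    ultimately show ?thesis by (rule bexI[rotated])
  next
    case 4
    define x where "x = Max {f\<in>F. f < c}"
    define x' where "x' = Min {f\<in>F. c \<le> f}"
    have "Min F \<in> {f\<in>F. f < c}" "Max F \<in> {f\<in>F. c \<le> f}"
      using 4 assms(1) by simp_all
    then have ne: "{f\<in>F. f < c} \<noteq> {}" "{f\<in>F. c \<le> f} \<noteq> {}" by blast+
    have fin: "finite {f\<in>F. f < c}" "finite {f\<in>F. c \<le> f}" using assms(1) by simp_all
    have x: "x \<in> F" "x < c" "\<forall>f\<in>F. f < c \<longrightarrow> f \<le> x"
      using Max_in[OF fin(1) ne(1)] Max_ge[OF fin(1)] unfolding x_def by simp_all
    have x': "x' \<in> F" "c \<le> x'" "\<forall>f\<in>F. c \<le> f \<longrightarrow> x' \<le> f"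
      using Min_in[OF fin(2) ne(2)] Min_le[OF fin(2)] unfolding x'_def by simp_all
    have "x < x'" using x(2) x'(2) by simp
    moreover have "\<not> (\<exists>z\<in>F. x < z \<and> z < x')"
      using x(3) x'(3) by (meson leD le_less_linear)
    ultimately have "{y \<in> \<mu>. x < y \<and> y \<le> x'} \<in> grid1 \<mu> F"
      using x(1) x'(1) unfolding grid1_def by auto
    moreover have "c \<in> {y \<in> \<mu>. x < y \<and> y \<le> x'}" using x(2) x'(2) assms(2) by simp
    ultimately show ?thesis by (rule bexI[rotated])
  qed
qed

lemma grid1_cell_in_grid1:
  fixes F :: "'a::wellorder set"
  assumes "finite F" "c \<in> \<mu>"
  shows "grid1_cell \<mu> F c \<in> grid1 \<mu> F"
  using grid1_covers[OF assms] grid1_eq_cell[OF assms(1)] by metis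
definition grid_cell :: "nat \<Rightarrow> (nat \<Rightarrow> 'a::linorder) \<Rightarrow> (nat \<Rightarrow> 'a set) \<Rightarrow> (nat \<Rightarrow> 'a) \<Rightarrow> (nat \<Rightarrow> 'a) set"
  where "grid_cell n \<alpha> F c = PiE {..<n} (\<lambda>i. grid1_cell {..\<alpha> i} (F i) (c i))"

lemma mem_grid_cell_self: "c \<in> down n \<alpha> \<Longrightarrow> c \<in> grid_cell n \<alpha> F c"
  unfolding grid_cell_def grid1_cell_def down_def by (simp add: PiE_iff)

lemma grid_cell_in_grid:
  assumes "c \<in> down n \<alpha>" "\<forall>i<n. finite (F i)"
  shows "grid_cell n \<alpha> F c \<in> grid n \<alpha> F"
proof -
  have "\<forall>i<n. grid1_cell {..\<alpha> i} (F i) (c i) \<in> grid1 {..\<alpha> i} (F i)"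
    using assms unfolding down_def by (auto simp: PiE_iff intro!: grid1_cell_in_grid1)
  then show ?thesis unfolding grid_def grid_cell_def by blast
qed

lemma grid_eq_cell:
  assumes "P \<in> grid n \<alpha> F" "p \<in> P" "\<forall>i<n. finite (F i)"
  shows "P = grid_cell n \<alpha> F p"
proof -
  obtain U where U: "P = PiE {..<n} U" "\<forall>i<n. U i \<in> grid1 {..\<alpha> i} (F i)"
    using assms(1) unfolding grid_def by blast
  have "U i = grid1_cell {..\<alpha> i} (F i) (p i)" if "i < n" for i
    using grid1_eq_cell[of "F i" "U i"] U assms(2,3) that by (simp add: PiE_iff)
  then show ?thesis unfolding U(1) grid_cell_def by (intro PiE_cong) simp
qed

lemma U_part_fixes: "h \<in> U_part n L \<alpha> \<A> \<Longrightarrow> x \<notin> down n \<alpha> \<Longrightarrow> h x = x"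
  unfolding U_part_def Homeo_K_def by blast

lemma U_part_grid_cell:
  assumes "h \<in> U_part n L \<alpha> (grid n \<alpha> F)" "c \<in> down n \<alpha>" "\<forall>i<n. finite (F i)"
  shows "h ` grid_cell n \<alpha> F c = grid_cell n \<alpha> F c"
  using assms grid_cell_in_grid[OF assms(2,3)] unfolding U_part_def by blast

lemma grid1_cell_mono:
  assumes "p \<le> a" "a \<le> b" "F \<inter> {..<a} \<subseteq> F'"
  shows "grid1_cell {..a} F' p \<subseteq> grid1_cell {..b} F p"
proof
  fix y assume y: "y \<in> grid1_cell {..a} F' p"
  have "f < p \<longleftrightarrow> f < y" if "f \<in> F" for f
  proof (cases "f < a")
    case True
    then show ?thesis using y that assms(3) unfolding grid1_cell_def by blast
  next
    case False
    have "y \<le> a" using y unfolding grid1_cell_def by simp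
    then have "\<not> f < p" "\<not> f < y" using False assms(1) by (meson not_less order.trans)+
    then show ?thesis by simp
  qed
  then show "y \<in> grid1_cell {..b} F p"
    using y assms(2) unfolding grid1_cell_def by (auto intro: order.trans)
qed

lemma grid_cell_mono:
  assumes "\<forall>i<n. \<alpha> i \<le> \<beta> i" "\<forall>i<n. F i \<inter> {..<\<alpha> i} \<subseteq> F' i" "p \<in> down n \<alpha>"
  shows "grid_cell n \<alpha> F' p \<subseteq> grid_cell n \<beta> F p"
  unfolding grid_cell_def
  using assms unfolding down_def by (intro PiE_mono grid1_cell_mono) (auto simp: PiE_iff)

lemma image_eq_of_invariant_cover:
  assumes "\<And>x. x \<in> P \<Longrightarrow> \<exists>Q. x \<in> Q \<and> Q \<subseteq> P \<and> h ` Q = Q"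
  shows "h ` P = P"
proof
  show "h ` P \<subseteq> P" using assms by blast
  show "P \<subseteq> h ` P" using assms by (metis image_mono subset_iff)
qed

lemma down_mono: "\<forall>i<n. \<alpha> i \<le> \<beta> i \<Longrightarrow> down n \<alpha> \<subseteq> down n \<beta>"
  unfolding down_def by (auto simp: PiE_iff intro: order.trans)

text \<open>Each piece of the coarser grid is a union of pieces of the finer one.\<close>

lemma U_part_grid_mono:
  assumes "\<forall>i<n. \<alpha> i \<le> \<beta> i" "\<forall>i<n. F i \<inter> {..<\<alpha> i} \<subseteq> F' i"
    and "\<forall>i<n. finite (F i)" "\<forall>i<n. finite (F' i)"
  shows "U_part n L \<alpha> (grid n \<alpha> F') \<subseteq> U_part n L \<beta> (grid n \<beta> F)"
proof
  fix h assume h: "h \<in> U_part n L \<alpha> (grid n \<alpha> F')"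
  have "h \<in> Homeo_K (ord_prod n L) (down n \<beta>)"
    using h down_mono[OF assms(1)] unfolding U_part_def Homeo_K_def by blast
  moreover have "h ` P = P" if P: "P \<in> grid n \<beta> F" for P
  proof (rule image_eq_of_invariant_cover)
    fix x assume "x \<in> P"
    show "\<exists>Q. x \<in> Q \<and> Q \<subseteq> P \<and> h ` Q = Q"
    proof (cases "x \<in> down n \<alpha>")
      case True
      have "grid_cell n \<alpha> F' x \<subseteq> P"
        using grid_cell_mono[OF assms(1,2) True] grid_eq_cell[OF P \<open>x \<in> P\<close> assms(3)] by simp
      then show ?thesis
        using mem_grid_cell_self[OF True] U_part_grid_cell[OF h True assms(4)] by blast
    next
      case False
      then show ?thesis using U_part_fixes[OF h False] \<open>x \<in> P\<close> by (intro exI[of _ "{x}"]) simp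
    qed
  qed
  ultimately show "h \<in> U_part n L \<beta> (grid n \<beta> F)" unfolding U_part_def by blast
qed

lemma grid1_cell_subset_left_seg:
  assumes "c \<in> left_seg x A" "x \<le> a" "insert x A \<inter> {..<a} \<subseteq> F"
  shows "grid1_cell {..a} F c \<subseteq> left_seg x A"
proof
  fix y assume y: "y \<in> grid1_cell {..a} F c"
  then have ya: "y \<le> a" and cut: "\<forall>f\<in>F. f < c \<longleftrightarrow> f < y" unfolding grid1_cell_def by auto
  have cx: "c \<le> x" and Ac: "\<forall>b\<in>A. b < c" using assms(1) unfolding left_seg_def by auto
  have "y \<le> x"
  proof (cases "x < a")
    case True
    then have "x \<in> F" using assms(3) by blast
    then show ?thesis using cut cx by (simp add: not_less[symmetric])
  next
    case False
    then show ?thesis using ya by simp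
  qed
  moreover have "b < y" if "b \<in> A" for b
  proof -
    have "b < a" using Ac that cx assms(2) by (meson less_le_trans order.trans)
    then have "b \<in> F" using assms(3) that by blast
    then show ?thesis using cut Ac that by blast
  qed
  ultimately show "y \<in> left_seg x A" unfolding left_seg_def by blast
qed

lemma grid_cell_subset_seg_box:
  assumes "c \<in> seg_box n x A" "x \<in> down n \<alpha>" "\<forall>i<n. insert (x i) (A i) \<inter> {..<\<alpha> i} \<subseteq> F i"
  shows "grid_cell n \<alpha> F c \<subseteq> seg_box n x A"
  using assms unfolding grid_cell_def seg_box_def down_def
  by (intro PiE_mono grid1_cell_subset_left_seg) (auto simp: PiE_iff)

section \<open>Grid neighbourhoods of the identity\<close>

definition grid_nbhd :: "nat \<Rightarrow> (nat \<Rightarrow> 'a::wellorder) \<Rightarrow> (nat \<Rightarrow> 'a) \<Rightarrow> nat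
    \<Rightarrow> ((nat \<Rightarrow> 'a) \<Rightarrow> (nat \<Rightarrow> 'a)) set \<Rightarrow> bool" where
  "grid_nbhd n L \<alpha> B V \<longleftrightarrow> (\<exists>F. (\<forall>i<n. finite (F i) \<and> F i \<subseteq> {..<\<alpha> i} \<and> card (F i) \<le> B) \<and>
     U_part n L \<alpha> (grid n \<alpha> F) \<subseteq> V)"

lemma grid_nbhd_mono: "grid_nbhd n L \<alpha> B V \<Longrightarrow> V \<subseteq> V' \<Longrightarrow> grid_nbhd n L \<alpha> B V'"
  unfolding grid_nbhd_def by blast

lemma grid_nbhd_Homeo_K: "grid_nbhd n L \<alpha> 0 (Homeo_K (ord_prod n L) (down n \<alpha>))"
  unfolding grid_nbhd_def U_part_def by (intro exI[of _ "\<lambda>i. {}"]) auto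

lemma grid_nbhd_Int:
  assumes "grid_nbhd n L \<alpha> B1 V1" "grid_nbhd n L \<alpha> B2 V2"
  shows "grid_nbhd n L \<alpha> (B1 + B2) (V1 \<inter> V2)"
proof -
  obtain F1 F2 where
    F1: "\<forall>i<n. finite (F1 i) \<and> F1 i \<subseteq> {..<\<alpha> i} \<and> card (F1 i) \<le> B1" "U_part n L \<alpha> (grid n \<alpha> F1) \<subseteq> V1"
    and
    F2: "\<forall>i<n. finite (F2 i) \<and> F2 i \<subseteq> {..<\<alpha> i} \<and> card (F2 i) \<le> B2" "U_part n L \<alpha> (grid n \<alpha> F2) \<subseteq> V2"
    using assms unfolding grid_nbhd_def by blast
  define F where "F i = F1 i \<union> F2 i" for i
  have "card (F i) \<le> B1 + B2" if "i < n" for i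
    using card_Un_le[of "F1 i" "F2 i"] F1(1) F2(1) that unfolding F_def by fastforce
  moreover have "U_part n L \<alpha> (grid n \<alpha> F) \<subseteq> U_part n L \<alpha> (grid n \<alpha> F1)"
    "U_part n L \<alpha> (grid n \<alpha> F) \<subseteq> U_part n L \<alpha> (grid n \<alpha> F2)"
    using F1(1) F2(1) unfolding F_def by (intro U_part_grid_mono; auto)+
  moreover have "\<forall>i<n. finite (F i) \<and> F i \<subseteq> {..<\<alpha> i}" using F1(1) F2(1) unfolding F_def by simp
  ultimately show ?thesis
    using F1(2) F2(2) unfolding grid_nbhd_def by (intro exI[of _ F]) blast
qed

lemma grid_nbhd_antimono:
  assumes "\<forall>i<n. \<alpha> i \<le> \<beta> i" "grid_nbhd n L \<beta> B V"
  shows "grid_nbhd n L \<alpha> B V"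
proof -
  obtain F where F: "\<forall>i<n. finite (F i) \<and> F i \<subseteq> {..<\<beta> i} \<and> card (F i) \<le> B"
    "U_part n L \<beta> (grid n \<beta> F) \<subseteq> V"
    using assms(2) unfolding grid_nbhd_def by blast
  define F' where "F' i = F i \<inter> {..<\<alpha> i}" for i
  have "card (F' i) \<le> B" if "i < n" for i
    using card_mono[of "F i" "F' i"] F(1) that unfolding F'_def by fastforce
  moreover have "U_part n L \<alpha> (grid n \<alpha> F') \<subseteq> U_part n L \<beta> (grid n \<beta> F)"
    using assms(1) F(1) unfolding F'_def by (intro U_part_grid_mono) auto
  ultimately show ?thesis
    using F unfolding grid_nbhd_def by (intro exI[of _ F']) (auto simp: F'_def)
qed

lemma finite_seg_box_cover:
  assumes \<alpha>: "\<alpha> \<in> topspace (ord_prod n L)"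
    and C: "compactin (ord_prod n L) C" and U: "openin (ord_prod n L) U" and "C \<subseteq> U"
  obtains C0 A where "finite C0" "C0 \<subseteq> C \<inter> down n \<alpha>" "C \<inter> down n \<alpha> \<subseteq> (\<Union>x\<in>C0. seg_box n x (A x))"
    "\<forall>x\<in>C0. (\<forall>i<n. finite (A x i)) \<and> seg_box n x (A x) \<subseteq> U"
proof -
  let ?X = "ord_prod n L" and ?D = "down n \<alpha>"
  have "\<forall>x\<in>C \<inter> ?D. \<exists>A. (\<forall>i<n. finite (A i) \<and> (\<forall>a\<in>A i. a < x i)) \<and> seg_box n x A \<subseteq> U"
    using ord_prod_nhds_seg_box[OF U] \<open>C \<subseteq> U\<close> by blast
  then obtain A where A: "\<forall>x\<in>C \<inter> ?D. (\<forall>i<n. finite (A x i) \<and> (\<forall>a\<in>A x i. a < x i)) \<and> seg_box n x (A x) \<subseteq> U"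
    by (metis bchoice)
  have CD: "C \<inter> ?D \<subseteq> topspace ?X" using C compactin_subset_topspace by blast
  have self: "x \<in> seg_box n x (A x)" if "x \<in> C \<inter> ?D" for x
    using A CD that by (intro mem_seg_box_self) (auto simp: topspace_ord_prod PiE_iff)
  have "compactin ?X (C \<inter> ?D)"
    using compact_Int_closedin[OF C closedin_down[OF \<alpha>]] .
  moreover have "openin ?X (seg_box n x (A x))" if "x \<in> C \<inter> ?D" for x
    using openin_seg_box CD A that by blast
  moreover have "C \<inter> ?D \<subseteq> (\<Union>x\<in>C \<inter> ?D. seg_box n x (A x))"
    using self by blast
  ultimately obtain C0 where C0: "finite C0" "C0 \<subseteq> C \<inter> ?D" "C \<inter> ?D \<subseteq> (\<Union>x\<in>C0. seg_box n x (A x))"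
    using compactinD[of ?X "C \<inter> ?D" "(\<lambda>x. seg_box n x (A x)) ` (C \<inter> ?D)"]
    by (metis (no_types, lifting) finite_subset_image imageE)
  moreover have "\<forall>x\<in>C0. (\<forall>i<n. finite (A x i)) \<and> seg_box n x (A x) \<subseteq> U"
    using A C0(2) by blast
  ultimately show ?thesis by (rule that)
qed

lemma grid_nbhd_compact_open_subbasis:
  assumes \<alpha>: "\<alpha> \<in> topspace (ord_prod n L)"
    and C: "compactin (ord_prod n L) C" and U: "openin (ord_prod n L) U" and "C \<subseteq> U"
  shows "\<exists>B. grid_nbhd n L \<alpha> B {h \<in> Homeo_K (ord_prod n L) (down n \<alpha>). h ` C \<subseteq> U}"
proof -
  let ?D = "down n \<alpha>"
  obtain C0 A where C0: "finite C0" "C0 \<subseteq> C \<inter> ?D" "C \<inter> ?D \<subseteq> (\<Union>x\<in>C0. seg_box n x (A x))"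
    and A: "\<forall>x\<in>C0. (\<forall>i<n. finite (A x i)) \<and> seg_box n x (A x) \<subseteq> U"
    using finite_seg_box_cover[OF assms] .
  define F where "F i = (\<Union>x\<in>C0. insert (x i) (A x i)) \<inter> {..<\<alpha> i}" for i
  have F: "\<forall>i<n. finite (F i) \<and> F i \<subseteq> {..<\<alpha> i}"
    using C0(1) A unfolding F_def by blast
  have "h ` C \<subseteq> U" if h: "h \<in> U_part n L \<alpha> (grid n \<alpha> F)" for h
  proof
    fix z assume "z \<in> h ` C"
    then obtain c where c: "c \<in> C" "z = h c" by blast
    show "z \<in> U"
    proof (cases "c \<in> ?D")
      case True
      then obtain x where x: "x \<in> C0" "c \<in> seg_box n x (A x)" using C0(3) c(1) by blast
      have "h c \<in> grid_cell n \<alpha> F c"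
        using U_part_grid_cell[OF h True] mem_grid_cell_self[OF True] F by blast
      also have "\<dots> \<subseteq> seg_box n x (A x)"
        using x C0(2) unfolding F_def by (intro grid_cell_subset_seg_box) auto
      also have "\<dots> \<subseteq> U" using A x(1) by blast
      finally show ?thesis using c(2) by simp
    next
      case False
      then show ?thesis using U_part_fixes[OF h False] c \<open>C \<subseteq> U\<close> by auto
    qed
  qed
  then have "grid_nbhd n L \<alpha> (\<Sum>i<n. card (F i)) {h \<in> Homeo_K (ord_prod n L) ?D. h ` C \<subseteq> U}"
    using F unfolding grid_nbhd_def U_part_def
    by (intro exI[of _ F]) (auto intro: member_le_sum)
  then show ?thesis by blast
qed

lemma grid_nbhd_of_openin:
  assumes \<alpha>: "\<alpha> \<in> topspace (ord_prod n L)"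
    and V: "openin (compact_open_top (ord_prod n L) (Homeo_K (ord_prod n L) (down n \<alpha>))) V"
    and "id \<in> V"
  shows "\<exists>B. grid_nbhd n L \<alpha> B V"
proof -
  let ?X = "ord_prod n L"
  let ?H = "Homeo_K ?X (down n \<alpha>)"
  have "generate_topology_on ({?H} \<union> {{h \<in> ?H. h ` C \<subseteq> U} | C U. compactin ?X C \<and> openin ?X U}) V"
    using V unfolding compact_open_top_def by (rule openin_topology_generated_by)
  then have "id \<in> V \<longrightarrow> (\<exists>B. grid_nbhd n L \<alpha> B V)"
  proof (induction rule: generate_topology_on.induct)
    case (Int V1 V2)
    then show ?case using grid_nbhd_Int by blast
  next
    case (UN K)
    show ?case
    proof
      assume "id \<in> \<Union>K"
      then obtain V where "V \<in> K" "id \<in> V" by blast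
      then obtain B where "grid_nbhd n L \<alpha> B V" using UN.IH by blast
      then show "\<exists>B. grid_nbhd n L \<alpha> B (\<Union>K)"
        using grid_nbhd_mono Union_upper[OF \<open>V \<in> K\<close>] by blast
    qed
  next
    case (Basis S)
    then consider "S = ?H"
      | C U where "S = {h \<in> ?H. h ` C \<subseteq> U}" "compactin ?X C" "openin ?X U"
      by blast
    then show ?case
    proof cases
      case 1
      then show ?thesis using grid_nbhd_Homeo_K by blast
    next
      case (2 C U)
      show ?thesis
      proof
        assume "id \<in> S"
        then have "C \<subseteq> U" using 2(1) by simp
        then show "\<exists>B. grid_nbhd n L \<alpha> B S"
          unfolding 2(1) using grid_nbhd_compact_open_subbasis[OF \<alpha> 2(2,3)] by blast
      qed
    qed
  qed simp
  then show ?thesis using \<open>id \<in> V\<close> by blast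
qed

lemma grid_nbhd_of_colim_open:
  assumes "\<alpha> \<in> topspace (ord_prod n L)" "colim_open (ord_prod n L) W" "id \<in> W"
  shows "\<exists>B. grid_nbhd n L \<alpha> B W"
proof -
  let ?H = "Homeo_K (ord_prod n L) (down n \<alpha>)"
  have "openin (compact_open_top (ord_prod n L) ?H) (W \<inter> ?H)"
    using assms(2) compactin_down[OF assms(1)] unfolding colim_open_def by blast
  moreover have "id \<in> W \<inter> ?H" using assms(3) unfolding Homeo_K_def by simp
  ultimately obtain B where "grid_nbhd n L \<alpha> B (W \<inter> ?H)"
    using grid_nbhd_of_openin[OF assms(1)] by blast
  then show ?thesis using grid_nbhd_mono[of n L \<alpha> B "W \<inter> ?H" W] by blast
qed

section \<open>Uniform bounds from uncountable cofinality\<close>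

lemma not_cofinality_omega_bounded:
  fixes g :: "nat \<Rightarrow> 'a::wellorder"
  assumes "\<not> cofinality_omega L" "\<forall>k. g k < L"
  shows "\<exists>b<L. \<forall>k. g k \<le> b"
proof (rule ccontr)
  assume "\<not> ?thesis"
  then have unbounded: "\<forall>b<L. \<exists>k. b < g k" by (meson not_le)
  have "\<exists>f. \<forall>j. (f j < L \<and> g j \<le> f j) \<and> f j < f (Suc j)"
  proof (rule dependent_nat_choice)
    show "\<exists>x. x < L \<and> g 0 \<le> x" using assms(2) by blast
  next
    fix x j assume x: "x < L \<and> g j \<le> x"
    then obtain k where "max x (g (Suc j)) < g k" using unbounded assms(2) by (metis max_less_iff_conj)
    then show "\<exists>y. (y < L \<and> g (Suc j) \<le> y) \<and> x < y"
      using assms(2) by (intro exI[of _ "g k"]) (simp add: less_imp_le)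
  qed
  then obtain f where f: "\<forall>j. (f j < L \<and> g j \<le> f j) \<and> f j < f (Suc j)" by blast
  have "strict_mono f" using f by (simp add: strict_mono_Suc_iff)
  moreover have "\<exists>k. y \<le> f k" if "y < L" for y
    using unbounded f that by (meson le_less_trans less_imp_le)
  ultimately have "cofinality_omega L" using f unfolding cofinality_omega_def by blast
  then show False using assms(1) by simp
qed

lemma ord_prod_seq_bounded:
  fixes s :: "nat \<Rightarrow> nat \<Rightarrow> 'a::wellorder"
  assumes "\<forall>i<n. \<not> cofinality_omega (L i)" "\<forall>k. s k \<in> topspace (ord_prod n L)"
  shows "\<exists>\<beta>\<in>topspace (ord_prod n L). \<forall>k. \<forall>i<n. s k i \<le> \<beta> i"
proof -
  have "\<exists>b<L i. \<forall>k. s k i \<le> b" if "i < n" for i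
    using not_cofinality_omega_bounded[of "L i" "\<lambda>k. s k i"] assms that
    by (simp add: topspace_ord_prod PiE_iff)
  then have "\<forall>i. \<exists>b. i < n \<longrightarrow> b < L i \<and> (\<forall>k. s k i \<le> b)" by blast
  then have "\<exists>b. \<forall>i. i < n \<longrightarrow> b i < L i \<and> (\<forall>k. s k i \<le> b i)" by (rule choice)
  then obtain b where b: "\<forall>i. i < n \<longrightarrow> b i < L i \<and> (\<forall>k. s k i \<le> b i)" by (elim exE)
  then have "restrict b {..<n} \<in> topspace (ord_prod n L)" by (simp add: topspace_ord_prod)
  then show ?thesis using b by (intro bexI[of _ "restrict b {..<n}"]) simp_all
qed

text \<open>Otherwise counterexamples for B = 0, 1, 2, ... have a common upper bound \<beta> in X, and the
  bound that works at \<beta> works at all of them.\<close>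

lemma ord_prod_uniform_bound:
  fixes P :: "(nat \<Rightarrow> 'a::wellorder) \<Rightarrow> nat \<Rightarrow> bool"
  assumes "\<forall>i<n. \<not> cofinality_omega (L i)"
    and ex: "\<And>\<alpha>. \<alpha> \<in> topspace (ord_prod n L) \<Longrightarrow> \<exists>B. P \<alpha> B"
    and antimono: "\<And>\<alpha> \<beta> B. \<forall>i<n. \<alpha> i \<le> \<beta> i \<Longrightarrow> P \<beta> B \<Longrightarrow> P \<alpha> B"
  shows "\<exists>B. \<forall>\<alpha>\<in>topspace (ord_prod n L). P \<alpha> B"
proof (rule ccontr)
  assume "\<not> ?thesis"
  then have "\<forall>B. \<exists>\<alpha>. \<alpha> \<in> topspace (ord_prod n L) \<and> \<not> P \<alpha> B" by blast
  then have "\<exists>s. \<forall>B. s B \<in> topspace (ord_prod n L) \<and> \<not> P (s B) B" by (rule choice)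
  then obtain s where s: "\<forall>B. s B \<in> topspace (ord_prod n L) \<and> \<not> P (s B) B" by (elim exE)
  obtain \<beta> where "\<beta> \<in> topspace (ord_prod n L)" "\<forall>B. \<forall>i<n. s B i \<le> \<beta> i"
    using ord_prod_seq_bounded[OF assms(1)] s by blast
  moreover obtain B where "P \<beta> B" using ex calculation(1) by blast
  ultimately show False using antimono s by blast
qed

section \<open>Padding the cut sets to a fixed size\<close>

lemma obtain_superset_with_card:
  assumes "finite F" "F \<subseteq> Y" "card F \<le> m" "finite S" "S \<subseteq> Y" "m \<le> card S"
  obtains F' where "F \<subseteq> F'" "F' \<subseteq> Y" "finite F'" "card F' = m"
proof -
  have "card S \<le> card ((S - F) \<union> F)" using assms(1,4) by (intro card_mono) auto
  also have "\<dots> \<le> card (S - F) + card F" by (rule card_Un_le)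
  finally have "m - card F \<le> card (S - F)" using assms(6) by linarith
  then obtain T where T: "T \<subseteq> S - F" "card T = m - card F" "finite T"
    by (rule obtain_subset_with_card_n)
  then have "card (F \<union> T) = m"
    using assms(1,3) card_Un_disjoint[of F T] by auto
  then show ?thesis using that T assms(1,2,5) by blast
qed

definition extends_to_card :: "nat \<Rightarrow> nat \<Rightarrow> 'a::order \<Rightarrow> bool" where
  "extends_to_card B m a \<longleftrightarrow> (\<forall>F. finite F \<and> F \<subseteq> {..<a} \<and> card F \<le> B \<longrightarrow>
     (\<exists>F'. F \<subseteq> F' \<and> F' \<subseteq> {..<a} \<and> finite F' \<and> card F' = m))"

lemma eventually_extends_to_card:
  fixes L :: "'a::wellorder"
  assumes "\<exists>x. x < L"
  shows "\<exists>z<L. \<exists>m. \<forall>a. z \<le> a \<and> a < L \<longrightarrow> extends_to_card B m a"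
proof (cases "finite {..<L}")
  case True
  define z where "z = Max {..<L}"
  have "{..<L} \<noteq> {}" using assms by auto
  then have z: "z < L" using Max_in[OF True] unfolding z_def by simp
  have top: "y \<le> z" if "y < L" for y using Max_ge[OF True] that unfolding z_def by simp
  have "{..<z} \<subseteq> {..<L}" using z by auto
  then have "finite {..<z}" using True by (rule finite_subset)
  then have "extends_to_card B (card {..<z}) z"
    unfolding extends_to_card_def by blast
  moreover have "a = z" if "z \<le> a" "a < L" for a using top[OF that(2)] that(1) by simp
  ultimately show ?thesis using z by blast
next
  case False
  then obtain S where S: "finite S" "card S = Suc B" "S \<subseteq> {..<L}"
    using infinite_arbitrarily_large by blast
  then have "S \<noteq> {}" by auto
  define z where "z = Max S"
  have z: "z \<in> S" "z < L" using Max_in[OF S(1) \<open>S \<noteq> {}\<close>] S(3) unfolding z_def by auto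
  have below: "y < z" if "y \<in> S - {z}" for y
  proof -
    have "y \<le> z" using Max_ge[OF S(1)] that unfolding z_def by simp
    then show ?thesis using that by (simp add: le_neq_trans)
  qed
  have card: "card (S - {z}) = B" using S(1,2) z(1) by (simp add: card_Diff_singleton)
  have "extends_to_card B B a" if "z \<le> a" for a
    unfolding extends_to_card_def
  proof (intro allI impI)
    fix F assume F: "finite F \<and> F \<subseteq> {..<a} \<and> card F \<le> B"
    have "S - {z} \<subseteq> {..<a}" using below that by (auto intro: less_le_trans)
    then obtain F' where "F \<subseteq> F'" "F' \<subseteq> {..<a}" "finite F'" "card F' = B"
      using obtain_superset_with_card[of F "{..<a}" B "S - {z}"] F S(1) card by auto
    then show "\<exists>F'. F \<subseteq> F' \<and> F' \<subseteq> {..<a} \<and> finite F' \<and> card F' = B" by blast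
  qed
  then show ?thesis using z(2) by blast
qed

lemma grid_nbhd_extends_to_card:
  assumes "grid_nbhd n L \<alpha> B W" "\<forall>i<n. extends_to_card B (m i) (\<alpha> i)"
  shows "\<exists>F. (\<forall>i<n. F i \<subseteq> {..<\<alpha> i} \<and> finite (F i) \<and> card (F i) = m i) \<and>
    U_part n L \<alpha> (grid n \<alpha> F) \<subseteq> W"
proof -
  obtain F where F: "\<forall>i<n. finite (F i) \<and> F i \<subseteq> {..<\<alpha> i} \<and> card (F i) \<le> B"
    "U_part n L \<alpha> (grid n \<alpha> F) \<subseteq> W"
    using assms(1) unfolding grid_nbhd_def by blast
  have "\<exists>F'. F i \<subseteq> F' \<and> F' \<subseteq> {..<\<alpha> i} \<and> finite F' \<and> card F' = m i" if "i < n" for i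
  proof -
    have "finite (F i) \<and> F i \<subseteq> {..<\<alpha> i} \<and> card (F i) \<le> B" using F(1) that by blast
    moreover have "extends_to_card B (m i) (\<alpha> i)" using assms(2) that by blast
    ultimately show ?thesis unfolding extends_to_card_def by blast
  qed
  then have "\<forall>i. \<exists>F'. i < n \<longrightarrow> F i \<subseteq> F' \<and> F' \<subseteq> {..<\<alpha> i} \<and> finite F' \<and> card F' = m i"
    by blast
  then have "\<exists>F'. \<forall>i. i < n \<longrightarrow> F i \<subseteq> F' i \<and> F' i \<subseteq> {..<\<alpha> i} \<and> finite (F' i) \<and> card (F' i) = m i"
    by (rule choice)
  then obtain F' where F': "\<forall>i<n. F i \<subseteq> F' i \<and> F' i \<subseteq> {..<\<alpha> i} \<and> finite (F' i) \<and> card (F' i) = m i"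
    by blast
  have "U_part n L \<alpha> (grid n \<alpha> F') \<subseteq> U_part n L \<alpha> (grid n \<alpha> F)"
    using F(1) F' by (intro U_part_grid_mono) auto
  then have "U_part n L \<alpha> (grid n \<alpha> F') \<subseteq> W" using F(2) by (rule order.trans)
  then show ?thesis using F' by (intro exI[of _ F']) simp
qed

lemma ord_prod_eventually_extends_to_card:
  assumes "\<forall>i<n. \<exists>x. x < L i"
  obtains z m where "z \<in> topspace (ord_prod n L)"
    "\<And>\<alpha>. \<alpha> \<in> topspace (ord_prod n L) \<Longrightarrow> \<forall>i<n. z i \<le> \<alpha> i \<Longrightarrow>
       \<forall>i<n. extends_to_card B (m i) (\<alpha> i)"
proof -
  have "\<exists>z<L i. \<exists>m. \<forall>a. z \<le> a \<and> a < L i \<longrightarrow> extends_to_card B m a" if "i < n" for i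
    using assms that by (intro eventually_extends_to_card) blast
  then have "\<forall>i. \<exists>z. \<exists>m. i < n \<longrightarrow> z < L i \<and> (\<forall>a. z \<le> a \<and> a < L i \<longrightarrow> extends_to_card B m a)"
    by blast
  then obtain z where "\<forall>i. \<exists>m. i < n \<longrightarrow> z i < L i \<and> (\<forall>a. z i \<le> a \<and> a < L i \<longrightarrow> extends_to_card B m a)"
    by (rule choice[THEN exE])
  then obtain m where zm: "\<forall>i. i < n \<longrightarrow> z i < L i \<and> (\<forall>a. z i \<le> a \<and> a < L i \<longrightarrow> extends_to_card B (m i) a)"
    by (rule choice[THEN exE])
  show ?thesis
  proof (rule that[of "restrict z {..<n}" m])
    show "restrict z {..<n} \<in> topspace (ord_prod n L)" using zm by (simp add: topspace_ord_prod)
    show "\<forall>i<n. extends_to_card B (m i) (\<alpha> i)"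
      if "\<alpha> \<in> topspace (ord_prod n L)" "\<forall>i<n. restrict z {..<n} i \<le> \<alpha> i" for \<alpha>
      using that zm by (simp add: topspace_ord_prod PiE_iff)
  qed
qed

theorem proposition5p10:
  fixes n :: nat and L :: "nat \<Rightarrow> 'a::wellorder"
    and W :: "((nat \<Rightarrow> 'a) \<Rightarrow> (nat \<Rightarrow> 'a)) set"
  assumes nonzero: "\<forall>i < n. \<exists>x. x < L i"
    and cf: "\<forall>i < n. \<not> cofinality_omega (L i)"
    and W_open: "colim_open (ord_prod n L) W"
    and id_W: "id \<in> W"
  shows "\<exists>(m :: nat \<Rightarrow> nat) \<alpha>1. \<alpha>1 \<in> topspace (ord_prod n L) \<and>
    (\<forall>\<alpha> \<in> topspace (ord_prod n L). (\<forall>i < n. \<alpha>1 i \<le> \<alpha> i) \<longrightarrow>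
       (\<exists>F :: nat \<Rightarrow> 'a set.
          (\<forall>i < n. F i \<subseteq> {..<\<alpha> i} \<and> finite (F i) \<and> card (F i) = m i) \<and>
          U_part n L \<alpha> (grid n \<alpha> F) \<subseteq> W \<inter> Homeo_K (ord_prod n L) (down n \<alpha>)))"
proof -
  let ?X = "ord_prod n L"
  have "\<exists>B. \<forall>\<alpha>\<in>topspace ?X. grid_nbhd n L \<alpha> B W"
    using cf grid_nbhd_of_colim_open[OF _ W_open id_W] grid_nbhd_antimono
    by (rule ord_prod_uniform_bound)
  then obtain B where B: "\<forall>\<alpha>\<in>topspace ?X. grid_nbhd n L \<alpha> B W" by blast
  obtain \<alpha>1 m where \<alpha>1: "\<alpha>1 \<in> topspace ?X"
    and ext: "\<And>\<alpha>. \<alpha> \<in> topspace ?X \<Longrightarrow> \<forall>i<n. \<alpha>1 i \<le> \<alpha> i \<Longrightarrow> \<forall>i<n. extends_to_card B (m i) (\<alpha> i)"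
    using ord_prod_eventually_extends_to_card[OF nonzero, where B = B] by metis
  show ?thesis
  proof (intro exI[of _ m] exI[of _ \<alpha>1] conjI ballI impI)
    show "\<alpha>1 \<in> topspace ?X" by (rule \<alpha>1)
    fix \<alpha> assume \<alpha>: "\<alpha> \<in> topspace ?X" and above: "\<forall>i<n. \<alpha>1 i \<le> \<alpha> i"
    obtain F where F: "\<forall>i<n. F i \<subseteq> {..<\<alpha> i} \<and> finite (F i) \<and> card (F i) = m i"
      "U_part n L \<alpha> (grid n \<alpha> F) \<subseteq> W"
      using grid_nbhd_extends_to_card[OF B[rule_format, OF \<alpha>] ext[OF \<alpha> above]]
      by (elim exE conjE)
    moreover have "U_part n L \<alpha> (grid n \<alpha> F) \<subseteq> Homeo_K ?X (down n \<alpha>)"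
      unfolding U_part_def by blast
    ultimately show "\<exists>F. (\<forall>i<n. F i \<subseteq> {..<\<alpha> i} \<and> finite (F i) \<and> card (F i) = m i) \<and>
        U_part n L \<alpha> (grid n \<alpha> F) \<subseteq> W \<inter> Homeo_K ?X (down n \<alpha>)"
      by blast
  qed
qed

end
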